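(* Fix a nominal state-control pair $p_k=(z_k,v_k)\in\mathbb{R}^{n_x+n_u}$ and calibration pairs $(x_i,u_i)$, $i=1,\dots,n$, with $n\ge 2$. Let $d_i:=\|[z_k^\top,v_k^\top]-[x_i^\top,u_i^\top]\|_2$ and assume the indices are ordered so that $d_1\le d_2\le\dots\le d_n$. Put $d_{\min}:=\min_{1\le i\le n-1}(d_{i+1}-d_i)$ and $d_{\max}:=\max_{1\le i\le n-1}(d_{i+1}-d_i)$, and assume $d_{\min}>0$. Let $\rho\in(0,1)$ and $\tilde w_i:=\rho^{d_i}/(1+\sum_{j=1}^n\rho^{d_j})$. Let $s_{1,k},\dots,s_{n,k},s_{k,k}$ be mutually independent real-valued random variables, where $s_{i,k}\sim S_{i,k}$ and $s_{k,k}\sim S_{k,k}$. Assume that for some $\epsilon>0$ and every $i$, $$d_{\mathrm{TV}}(S_{i,k},S_{k,k})\le \epsilon\, d_i .$$ Let $S^{k,k}$ be the joint law of $(s_{1,k},\dots,s_{n,k},s_{k,k})$, and let $S^{i,k}$ be the joint law of the vector obtained from it by swapping the entries $s_{i,k}$ and $s_{k,k}$. Then the coverage gap $\sum_{i=1}^n\tilde w_i\, d_{\mathrm{TV}}(S^{i,k},S^{k,k})$ satisfies $$\sum_{i=1}^n\tilde w_i\, d_{\mathrm{TV}}(S^{i,k},S^{k,k})\;\le\;\sum_{i=1}^n\frac{\rho^{d_i}}{1+\sum_{j=1}^n\rho^{d_j}}\cdot 2\epsilon\, d_i\;\le\;2\epsilon\left[\frac{d_1}{1-\rho^{d_{\m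in}}}+\frac{d_{\max}\,\rho^{d_{\min}}}{(1-\rho^{d_{\min}})^2}\right].$$
   Context: $d_{\mathrm{TV}}$ denotes the total-variation distance between probability distributions. The random variables are interpreted as nonconformity scores: $s_{i,k}$ is the score of calibration point $i$, and $s_{k,k}$ is the (unknown) score at the nominal point $(z_k,v_k)$. The normalized weights $\tilde w_i$ come from the unnormalized weights $w_i=\rho^{d_i}$ together with a test weight $w_{\mathrm{test}}=1$. The test point receives normalized weight $\tilde w_{\mathrm{test}}=1/(1+\sum_j\rho^{d_j})$. *)

theory Defs
  imports "HOL-Probability.Probability"
begin

definition tv_dist :: "'a measure \<Rightarrow> 'a measure \<Rightarrow> real" where
  "tv_dist P Q = (SUP A\<in>sets P. \<bar>measure P A - measure Q A\<bar>)"

text \<open>Index 0 stands for the nominal/test index k; indices 1..n are calibration points.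
swap_idx i exchanges positions i and 0.\<close>
definition swap_idx :: "nat \<Rightarrow> nat \<Rightarrow> nat" where
  "swap_idx i j = (if j = i then 0 else if j = 0 then i else j)"

end

(*
  By independence, the law of (s_1,...,s_n,s_0) is the product of its marginals, and
  swapping entries i and 0 permutes the factors. Passing through the product in which
  both coordinates i and 0 carry the law of s_0, the swapped and unswapped laws are
  each one factor away from it, and two product measures differing in a single factor
  are at most that factor's TV distance apart (Fubini over the remaining coordinates).
  Hence each term is at most 2 eps d_i. For the second bound, drop the normalisation
  (the denominator is at least 1) and use the gaps: d_{m+1} >= d_1 + m dmin gives
  rho^{d_{m+1}} <= r^m with r = rho^{dmin}, and d_{m+1} <= d_1 + m dmax, so the sum is
  dominated by d_1 sum r^m + dmax sum m r^m <= d_1/(1-r) + dmax r/(1-r)^2.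
*)
theory Submission
  imports Defs
begin

lemma abs_measure_diff_le_tv_dist:
  assumes P: "prob_space P" and Q: "prob_space Q" and A: "A \<in> sets P"
  shows "\<bar>measure P A - measure Q A\<bar> \<le> tv_dist P Q"
  unfolding tv_dist_def
proof (rule cSUP_upper[OF A])
  have "\<bar>measure P B - measure Q B\<bar> \<le> 1" for B
    using prob_space.prob_le_1[OF P, of B] prob_space.prob_le_1[OF Q, of B]
      measure_nonneg[of P B] measure_nonneg[of Q B] by linarith
  then show "bdd_above ((\<lambda>A. \<bar>measure P A - measure Q A\<bar>) ` sets P)"
    by (intro bdd_aboveI2) auto
qed

lemma tv_dist_le:
  assumes "\<And>A. A \<in> sets P \<Longrightarrow> \<bar>measure P A - measure Q A\<bar> \<le> c"
  shows "tv_dist P Q \<le> c"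
  unfolding tv_dist_def
  by (rule cSUP_least) (use assms sets.empty_sets in auto)

lemma tv_dist_commute:
  assumes "sets P = sets Q"
  shows "tv_dist P Q = tv_dist Q P"
  unfolding tv_dist_def assms by (simp add: abs_minus_commute)

lemma tv_dist_triangle:
  assumes P: "prob_space P" and Q: "prob_space Q" and R: "prob_space R"
    and sets_eq: "sets R = sets P"
  shows "tv_dist P Q \<le> tv_dist P R + tv_dist R Q"
proof (rule tv_dist_le)
  fix A assume A: "A \<in> sets P"
  have "\<bar>measure P A - measure Q A\<bar> \<le> \<bar>measure P A - measure R A\<bar> + \<bar>measure R A - measure Q A\<bar>"
    by linarith
  also have "\<dots> \<le> tv_dist P R + tv_dist R Q"
    using A sets_eq
    by (intro add_mono abs_measure_diff_le_tv_dist[OF P R] abs_measure_diff_le_tv_dist[OF R Q]) auto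
  finally show "\<bar>measure P A - measure Q A\<bar> \<le> tv_dist P R + tv_dist R Q" .
qed

lemma measure_PiM_insert_eq_integral_slice:
  fixes M :: "'i \<Rightarrow> 'a measure"
  assumes J: "finite J" "k \<notin> J" and M: "\<And>j. prob_space (M j)"
    and A: "A \<in> sets (PiM (insert k J) M)"
  shows "(\<lambda>x. measure (M k) ((\<lambda>y. x(k := y)) -` A \<inter> space (M k))) \<in> borel_measurable (PiM J M)"
    and "measure (PiM (insert k J) M) A
           = (\<integral>x. measure (M k) ((\<lambda>y. x(k := y)) -` A \<inter> space (M k)) \<partial>PiM J M)"
proof -
  interpret product_sigma_finite M
    by (simp add: product_sigma_finite_def prob_space_imp_sigma_finite M)
  interpret prob_space "PiM (insert k J) M"
    by (rule prob_space_PiM) (use M in auto)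
  have slice: "measure (M k) ((\<lambda>y. x(k := y)) -` A \<inter> space (M k))
                 = (\<integral>y. indicator A (x(k := y)) \<partial>M k)" for x
    by (simp add: indicator_vimage[symmetric])
  show "(\<lambda>x. measure (M k) ((\<lambda>y. x(k := y)) -` A \<inter> space (M k))) \<in> borel_measurable (PiM J M)"
    unfolding slice
    by (rule sigma_finite_measure.borel_measurable_lebesgue_integral[OF prob_space_imp_sigma_finite[OF M]])
      (use A J in measurable)
  have "integrable (PiM (insert k J) M) (indicator A :: _ \<Rightarrow> real)"
    using A by (intro integrable_real_indicator) (simp_all add: less_top[symmetric])
  then have "measure (PiM (insert k J) M) A = (\<integral>x. (\<integral>y. indicator A (x(k := y)) \<partial>M k) \<partial>PiM J M)"
    using A by (simp add: product_integral_insert[OF J, symmetric] sets.Int_space_eq2)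
  then show "measure (PiM (insert k J) M) A
               = (\<integral>x. measure (M k) ((\<lambda>y. x(k := y)) -` A \<inter> space (M k)) \<partial>PiM J M)"
    by (simp add: slice)
qed

lemma abs_measure_PiM_insert_fun_upd_diff_le:
  fixes M :: "'i \<Rightarrow> 'a measure"
  assumes J: "finite J" "k \<notin> J" and M: "\<And>j. prob_space (M j)"
    and N: "prob_space N" and sets_N: "sets N = sets (M k)"
    and A: "A \<in> sets (PiM (insert k J) M)"
  shows "\<bar>measure (PiM (insert k J) M) A - measure (PiM (insert k J) (M(k := N))) A\<bar>
           \<le> tv_dist (M k) N"
proof -
  interpret J: prob_space "PiM J M"
    using M by (intro prob_space_PiM) auto
  have "sets (PiM (insert k J) (M(k := N))) = sets (PiM (insert k J) M)"
    using sets_N by (intro sets_PiM_cong) auto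
  with A have A': "A \<in> sets (PiM (insert k J) (M(k := N)))"
    by simp
  have M_upd: "prob_space ((M(k := N)) j)" for j
    using M N by simp
  have PiM_J: "PiM J (M(k := N)) = PiM J M"
    using J by (intro PiM_cong) auto
  have space_N: "space N = space (M k)"
    using sets_N by (rule sets_eq_imp_space_eq)
  define g where "g = (\<lambda>x. measure (M k) ((\<lambda>y. x(k := y)) -` A \<inter> space (M k)))"
  define h where "h = (\<lambda>x. measure N ((\<lambda>y. x(k := y)) -` A \<inter> space (M k)))"
  have g: "g \<in> borel_measurable (PiM J M)" "measure (PiM (insert k J) M) A = (\<integral>x. g x \<partial>PiM J M)"
    unfolding g_def by (intro measure_PiM_insert_eq_integral_slice J M A)+
  have h: "h \<in> borel_measurable (PiM J M)"
    "measure (PiM (insert k J) (M(k := N))) A = (\<integral>x. h x \<partial>PiM J M)"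
    using measure_PiM_insert_eq_integral_slice[where M="M(k := N)", OF J M_upd A']
    by (simp_all add: h_def PiM_J space_N)
  have integrable: "integrable (PiM J M) g" "integrable (PiM J M) h"
    using g(1) h(1) prob_space.prob_le_1[OF M] prob_space.prob_le_1[OF N]
    by (auto intro!: J.integrable_const_bound[where B=1] simp: g_def h_def)
  have pointwise: "\<bar>g x - h x\<bar> \<le> tv_dist (M k) N" if x: "x \<in> space (PiM J M)" for x
  proof -
    have "(\<lambda>y. x(k := y)) \<in> measurable (M k) (PiM (insert k J) M)"
      using x J(2) by (rule measurable_component_update)
    then have "(\<lambda>y. x(k := y)) -` A \<inter> space (M k) \<in> sets (M k)"
      using A by (rule measurable_sets)
    then show ?thesis
      unfolding g_def h_def using M N by (intro abs_measure_diff_le_tv_dist) auto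
  qed
  have "\<bar>measure (PiM (insert k J) M) A - measure (PiM (insert k J) (M(k := N))) A\<bar>
          = \<bar>\<integral>x. g x - h x \<partial>PiM J M\<bar>"
    using integrable by (simp add: g(2) h(2))
  also have "\<dots> \<le> (\<integral>x. \<bar>g x - h x\<bar> \<partial>PiM J M)"
    by (rule integral_abs_bound)
  also have "\<dots> \<le> tv_dist (M k) N"
    using integrable pointwise by (intro J.integral_le_const) auto
  finally show ?thesis .
qed

lemma tv_dist_PiM_fun_upd_le:
  fixes M :: "'i \<Rightarrow> 'a measure"
  assumes I: "finite I" "k \<in> I" and M: "\<And>j. j \<in> I \<Longrightarrow> prob_space (M j)"
    and N: "prob_space N" and sets_N: "sets N = sets (M k)"
  shows "tv_dist (PiM I M) (PiM I (M(k := N))) \<le> tv_dist (M k) N"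
proof -
  define J where "J = I - {k}"
  have J: "I = insert k J" "finite J" "k \<notin> J"
    using I by (auto simp: J_def)
  \<comment> \<open>Fubini needs every factor to be a probability space; factors outside I do not affect PiM I.\<close>
  define M' where "M' j = (if j \<in> I then M j else N)" for j
  have M': "prob_space (M' j)" for j
    using M N by (simp add: M'_def)
  have M'_k: "M' k = M k"
    using I by (simp add: M'_def)
  have "PiM I M = PiM I M'" "PiM I (M(k := N)) = PiM I (M'(k := N))"
    by (auto intro!: PiM_cong simp: M'_def)
  then show ?thesis
    using abs_measure_PiM_insert_fun_upd_diff_le[where M=M', OF J(2,3) M' N] sets_N
    by (intro tv_dist_le) (simp add: J(1) M'_k)
qed

lemma (in prob_space) distr_reindex_indep_vars:
  fixes X :: "'i \<Rightarrow> 'a \<Rightarrow> 'b"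
  assumes "I \<noteq> {}" and \<sigma>: "inj_on \<sigma> I" "\<sigma> \<in> I \<rightarrow> I"
    and rv: "\<And>j. j \<in> I \<Longrightarrow> random_variable M' (X j)"
    and indep: "indep_vars (\<lambda>_. M') X I"
  shows "distr M (PiM I (\<lambda>_. M')) (\<lambda>\<omega>. \<lambda>j\<in>I. X (\<sigma> j) \<omega>)
           = PiM I (\<lambda>j. distr M M' (X (\<sigma> j)))"
proof -
  let ?law = "distr M (PiM I (\<lambda>_. M')) (\<lambda>\<omega>. \<lambda>j\<in>I. X j \<omega>)"
  let ?reindex = "\<lambda>f. \<lambda>j\<in>I. f (\<sigma> j)"
  have law: "?law = PiM I (\<lambda>j. distr M M' (X j))"
    using indep_vars_iff_distr_eq_PiM'[where I=I and M'="\<lambda>_. M'" and X=X] assms by simp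
  have X: "(\<lambda>\<omega>. \<lambda>j\<in>I. X j \<omega>) \<in> measurable M (PiM I (\<lambda>_. M'))"
    using rv by (intro measurable_restrict) auto
  have reindex: "?reindex \<in> measurable (PiM I (\<lambda>_. M')) (PiM I (\<lambda>_. M'))"
    using \<sigma> by (intro measurable_restrict measurable_component_singleton) auto
  have "distr M (PiM I (\<lambda>_. M')) (\<lambda>\<omega>. \<lambda>j\<in>I. X (\<sigma> j) \<omega>)
          = distr M (PiM I (\<lambda>_. M')) (?reindex \<circ> (\<lambda>\<omega>. \<lambda>j\<in>I. X j \<omega>))"
    using \<sigma> by (intro distr_cong) (auto simp: fun_eq_iff)
  also have "\<dots> = distr ?law (PiM I (\<lambda>_. M')) ?reindex"
    by (rule distr_distr[symmetric, OF reindex X])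
  also have "\<dots> = distr (PiM I (\<lambda>j. distr M M' (X j))) (PiM I (\<lambda>j. distr M M' (X (\<sigma> j)))) ?reindex"
    unfolding law by (intro distr_cong) (auto intro!: sets_PiM_cong)
  also have "\<dots> = PiM I (\<lambda>j. distr M M' (X (\<sigma> j)))"
    using rv by (intro distr_PiM_reindex \<sigma> prob_space_distr)
  finally show ?thesis .
qed

lemma (in prob_space) tv_dist_distr_transpose_le:
  fixes X :: "'i \<Rightarrow> 'a \<Rightarrow> 'b"
  assumes I: "finite I" "i \<in> I" "k \<in> I"
    and rv: "\<And>j. j \<in> I \<Longrightarrow> random_variable M' (X j)"
    and indep: "indep_vars (\<lambda>_. M') X I"
  shows "tv_dist (distr M (PiM I (\<lambda>_. M')) (\<lambda>\<omega>. \<lambda>j\<in>I. X (Transposition.transpose i k j) \<omega>))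
                 (distr M (PiM I (\<lambda>_. M')) (\<lambda>\<omega>. \<lambda>j\<in>I. X j \<omega>))
           \<le> 2 * tv_dist (distr M M' (X i)) (distr M M' (X k))"
proof -
  define N where "N = (\<lambda>j. distr M M' (X j))"
  \<comment> \<open>R gives coordinates i and k both the law of X k; each of the two laws differs from it in one factor.\<close>
  define R where "R = N(i := N k)"
  have N: "prob_space (N j)" "sets (N j) = sets M'" if "j \<in> I" for j
    using rv that by (auto simp: N_def intro: prob_space_distr)
  have R: "prob_space (R j)" "sets (R j) = sets M'" if "j \<in> I" for j
    using N I that by (auto simp: R_def)
  have "inj_on (Transposition.transpose i k) I" "Transposition.transpose i k \<in> I \<rightarrow> I"
    using I by (auto simp: inj_on_def Transposition.transpose_def)
  then have "distr M (PiM I (\<lambda>_. M')) (\<lambda>\<omega>. \<lambda>j\<in>I. X (Transposition.transpose i k j) \<omega>)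
              = PiM I (\<lambda>j. N (Transposition.transpose i k j))"
    unfolding N_def using I rv indep by (intro distr_reindex_indep_vars) auto
  also have "(\<lambda>j. N (Transposition.transpose i k j)) = R(k := N i)"
    by (auto simp: R_def Transposition.transpose_def)
  finally have swapped:
    "distr M (PiM I (\<lambda>_. M')) (\<lambda>\<omega>. \<lambda>j\<in>I. X (Transposition.transpose i k j) \<omega>) = PiM I (R(k := N i))" .
  have law: "distr M (PiM I (\<lambda>_. M')) (\<lambda>\<omega>. \<lambda>j\<in>I. X j \<omega>) = PiM I N"
    using indep_vars_iff_distr_eq_PiM'[where I=I and M'="\<lambda>_. M'" and X=X] I rv indep by (auto simp: N_def)
  have prob: "prob_space (PiM I N)" "prob_space (PiM I R)" "prob_space (PiM I (R(k := N i)))"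
    using N R I by (auto intro!: prob_space_PiM)
  have sets: "sets (PiM I R) = sets (PiM I (R(k := N i)))" "sets (PiM I N) = sets (PiM I R)"
    using N R I by (auto intro!: sets_PiM_cong split: if_splits)
  have "tv_dist (PiM I (R(k := N i))) (PiM I N)
          \<le> tv_dist (PiM I (R(k := N i))) (PiM I R) + tv_dist (PiM I R) (PiM I N)"
    using prob sets by (intro tv_dist_triangle) auto
  also have "\<dots> = tv_dist (PiM I R) (PiM I (R(k := N i))) + tv_dist (PiM I N) (PiM I (N(i := N k)))"
    using sets by (simp add: tv_dist_commute R_def)
  also have "\<dots> \<le> tv_dist (R k) (N i) + tv_dist (N i) (N k)"
    using N R I by (intro add_mono tv_dist_PiM_fun_upd_le) auto
  also have "\<dots> = 2 * tv_dist (N i) (N k)"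
    using N I by (simp add: R_def tv_dist_commute)
  finally show ?thesis
    by (simp add: swapped law N_def)
qed

lemma sum_power_le_geometric:
  fixes r :: real
  assumes "0 \<le> r" "r < 1"
  shows "(\<Sum>m<n. r ^ m) \<le> 1 / (1 - r)"
proof -
  have "(\<lambda>m. r ^ m) sums (1 / (1 - r))"
    using assms by (intro geometric_sums) simp
  then show ?thesis
    using assms by (auto simp: sums_iff intro!: sum_le_suminf[THEN order.trans])
qed

lemma sums_of_nat_mult_power:
  fixes r :: real
  assumes "\<bar>r\<bar> < 1"
  shows "(\<lambda>m. real m * r ^ m) sums (r / (1 - r)\<^sup>2)"
proof -
  have "(\<lambda>m. r * (real (Suc m) * r ^ m)) sums (r * (1 / (1 - r)\<^sup>2))"
    using assms by (intro sums_mult geometric_deriv_sums) simp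
  then have "(\<lambda>m. real (Suc m) * r ^ Suc m) sums (r / (1 - r)\<^sup>2)"
    by (simp add: algebra_simps)
  then show ?thesis
    using sums_Suc_iff[of "\<lambda>m. real m * r ^ m" "r / (1 - r)\<^sup>2"] by simp
qed

lemma sum_of_nat_mult_power_le:
  fixes r :: real
  assumes "0 \<le> r" "r < 1"
  shows "(\<Sum>m<n. real m * r ^ m) \<le> r / (1 - r)\<^sup>2"
  using sums_of_nat_mult_power[of r] assms
  by (auto simp: sums_iff intro!: sum_le_suminf[THEN order.trans])

lemma lower_bound_from_increments:
  fixes f :: "nat \<Rightarrow> real"
  assumes increment: "\<And>m. a \<le> m \<Longrightarrow> m < b \<Longrightarrow> c \<le> f (Suc m) - f m"
    and "a \<le> m" "m \<le> b"
  shows "f a + real (m - a) * c \<le> f m"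
  using assms(2,3)
proof (induction m rule: dec_induct)
  case (step m)
  then show ?case
    using increment[of m] by (simp add: Suc_diff_le algebra_simps)
qed simp

lemma sum_powr_mult_le:
  fixes d :: "nat \<Rightarrow> real" and \<rho> \<delta> \<Delta> :: real
  assumes rho: "0 < \<rho>" "\<rho> < 1" and "0 < \<delta>" "0 \<le> \<Delta>" "0 \<le> d 1"
    and gap_ge: "\<And>m. 1 \<le> m \<Longrightarrow> m < n \<Longrightarrow> \<delta> \<le> d (Suc m) - d m"
    and gap_le: "\<And>m. 1 \<le> m \<Longrightarrow> m < n \<Longrightarrow> d (Suc m) - d m \<le> \<Delta>"
  shows "(\<Sum>i=1..n. \<rho> powr d i * d i)
           \<le> d 1 / (1 - \<rho> powr \<delta>) + \<Delta> * \<rho> powr \<delta> / (1 - \<rho> powr \<delta>)\<^sup>2"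
proof -
  define r where "r = \<rho> powr \<delta>"
  have r: "0 < r" "r < 1"
    unfolding r_def using rho \<open>0 < \<delta>\<close> powr_less_mono'[of \<rho> 0 \<delta>] by auto
  have term_le: "\<rho> powr d (Suc m) * d (Suc m) \<le> d 1 * r ^ m + \<Delta> * (real m * r ^ m)"
    if "Suc m \<le> n" for m
  proof -
    have lo: "d 1 + real m * \<delta> \<le> d (Suc m)"
      using lower_bound_from_increments[of 1 n \<delta> d "Suc m"] gap_ge that by simp
    have hi: "d (Suc m) \<le> d 1 + real m * \<Delta>"
      using lower_bound_from_increments[of 1 n "- \<Delta>" "\<lambda>i. - d i" "Suc m"] gap_le that
      by fastforce
    have "0 \<le> real m * \<delta>"
      using \<open>0 < \<delta>\<close> by simp
    then have d_nonneg: "0 \<le> d (Suc m)"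
      using lo \<open>0 \<le> d 1\<close> by linarith
    have "\<rho> powr d (Suc m) \<le> \<rho> powr (\<delta> * real m)"
      using lo \<open>0 \<le> d 1\<close> rho by (intro powr_mono') (auto simp: mult.commute)
    also have "\<dots> = r ^ m"
      using rho by (simp add: r_def powr_powr[symmetric] powr_realpow)
    finally have "\<rho> powr d (Suc m) * d (Suc m) \<le> r ^ m * (d 1 + real m * \<Delta>)"
      using hi d_nonneg r by (intro mult_mono) auto
    then show ?thesis
      by (simp add: algebra_simps)
  qed
  have "(\<Sum>i=1..n. \<rho> powr d i * d i) = (\<Sum>m<n. \<rho> powr d (Suc m) * d (Suc m))"
    by (simp add: sum.atLeast1_atMost_eq)
  also have "\<dots> \<le> (\<Sum>m<n. d 1 * r ^ m + \<Delta> * (real m * r ^ m))"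
    by (intro sum_mono term_le) auto
  also have "\<dots> = d 1 * (\<Sum>m<n. r ^ m) + \<Delta> * (\<Sum>m<n. real m * r ^ m)"
    by (simp add: sum.distrib sum_distrib_left)
  also have "\<dots> \<le> d 1 * (1 / (1 - r)) + \<Delta> * (r / (1 - r)\<^sup>2)"
    using assms r
    by (intro add_mono mult_left_mono sum_power_le_geometric sum_of_nat_mult_power_le) auto
  finally show ?thesis
    by (simp add: r_def)
qed

lemma sum_normalized_powr_mult_le:
  fixes d :: "nat \<Rightarrow> real" and \<rho> \<delta> \<Delta> c :: real
  assumes rho: "0 < \<rho>" "\<rho> < 1" and "0 < \<delta>" "0 \<le> \<Delta>" "0 \<le> c"
    and d_nonneg: "\<And>i. 0 \<le> d i"
    and gap_ge: "\<And>m. 1 \<le> m \<Longrightarrow> m < n \<Longrightarrow> \<delta> \<le> d (Suc m) - d m"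
    and gap_le: "\<And>m. 1 \<le> m \<Longrightarrow> m < n \<Longrightarrow> d (Suc m) - d m \<le> \<Delta>"
  shows "(\<Sum>i=1..n. (\<rho> powr d i / (1 + (\<Sum>j=1..n. \<rho> powr d j))) * (c * d i))
           \<le> c * (d 1 / (1 - \<rho> powr \<delta>) + \<Delta> * \<rho> powr \<delta> / (1 - \<rho> powr \<delta>)\<^sup>2)"
proof -
  have D: "1 \<le> 1 + (\<Sum>j=1..n. \<rho> powr d j)"
    by (simp add: sum_nonneg)
  have "(\<Sum>i=1..n. (\<rho> powr d i / (1 + (\<Sum>j=1..n. \<rho> powr d j))) * (c * d i))
          \<le> (\<Sum>i=1..n. \<rho> powr d i * (c * d i))"
    using D rho \<open>0 \<le> c\<close> d_nonneg
    by (intro sum_mono mult_right_mono) (auto simp: divide_le_eq mult_le_cancel_left1)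
  also have "\<dots> = c * (\<Sum>i=1..n. \<rho> powr d i * d i)"
    by (simp add: sum_distrib_left algebra_simps)
  also have "\<dots> \<le> c * (d 1 / (1 - \<rho> powr \<delta>) + \<Delta> * \<rho> powr \<delta> / (1 - \<rho> powr \<delta>)\<^sup>2)"
    using assms by (intro mult_left_mono sum_powr_mult_le) auto
  finally show ?thesis .
qed

theorem theorem3:
  fixes z :: "real ^ 'nx" and v :: "real ^ 'nu"
    and x :: "nat \<Rightarrow> real ^ 'nx" and u :: "nat \<Rightarrow> real ^ 'nu"
    and n :: nat and \<rho> \<epsilon> :: real
    and M :: "'w measure" and s :: "nat \<Rightarrow> 'w \<Rightarrow> real"
    and d :: "nat \<Rightarrow> real" and dmin dmax :: real
  assumes n2: "n \<ge> 2"
    and d_def: "\<And>i. d i = norm ((z, v) - (x i, u i))"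
    and sorted: "\<And>i. 1 \<le> i \<Longrightarrow> i < n \<Longrightarrow> d i \<le> d (Suc i)"
    and dmin_def: "dmin = Min ((\<lambda>i. d (Suc i) - d i) ` {1..<n})"
    and dmax_def: "dmax = Max ((\<lambda>i. d (Suc i) - d i) ` {1..<n})"
    and dmin_pos: "dmin > 0"
    and rho: "0 < \<rho>" "\<rho> < 1"
    and eps: "\<epsilon> > 0"
    and M: "prob_space M"
    and rv: "\<And>i. i \<in> {0..n} \<Longrightarrow> s i \<in> borel_measurable M"
    and indep: "prob_space.indep_vars M (\<lambda>_. borel) s {0..n}"
    and tv: "\<And>i. i \<in> {1..n} \<Longrightarrow>
               tv_dist (distr M borel (s i)) (distr M borel (s 0)) \<le> \<epsilon> * d i"
  shows "(\<Sum>i=1..n. (\<rho> powr d i / (1 + (\<Sum>j=1..n. \<rho> powr d j))) *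
            tv_dist (distr M (PiM {0..n} (\<lambda>_. borel)) (\<lambda>\<omega>. \<lambda>j\<in>{0..n}. s (swap_idx i j) \<omega>))
                    (distr M (PiM {0..n} (\<lambda>_. borel)) (\<lambda>\<omega>. \<lambda>j\<in>{0..n}. s j \<omega>)))
         \<le> (\<Sum>i=1..n. (\<rho> powr d i / (1 + (\<Sum>j=1..n. \<rho> powr d j))) * (2 * \<epsilon> * d i))
       \<and> (\<Sum>i=1..n. (\<rho> powr d i / (1 + (\<Sum>j=1..n. \<rho> powr d j))) * (2 * \<epsilon> * d i))
         \<le> 2 * \<epsilon> * (d 1 / (1 - \<rho> powr dmin) + dmax * \<rho> powr dmin / (1 - \<rho> powr dmin)^2)"
proof -
  interpret M: prob_space M by (rule M)
  have swap_idx: "swap_idx i = Transposition.transpose i 0" for i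
    by (auto simp: swap_idx_def Transposition.transpose_def)
  have tv_swap: "tv_dist (distr M (PiM {0..n} (\<lambda>_. borel)) (\<lambda>\<omega>. \<lambda>j\<in>{0..n}. s (swap_idx i j) \<omega>))
                   (distr M (PiM {0..n} (\<lambda>_. borel)) (\<lambda>\<omega>. \<lambda>j\<in>{0..n}. s j \<omega>)) \<le> 2 * \<epsilon> * d i"
    if "i \<in> {1..n}" for i
    using M.tv_dist_distr_transpose_le[where I="{0..n}" and i=i and k=0 and X=s and M'=borel]
      tv[OF that] rv indep that
    unfolding swap_idx by fastforce
  \<comment> \<open>The hypothesis sorted is subsumed by these gap bounds and dmin > 0.\<close>
  have gaps: "dmin \<le> d (Suc m) - d m" "d (Suc m) - d m \<le> dmax" if "1 \<le> m" "m < n" for m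
    unfolding dmin_def dmax_def using that by (auto intro!: Min_le Max_ge)
  have "(\<Sum>i=1..n. (\<rho> powr d i / (1 + (\<Sum>j=1..n. \<rho> powr d j))) * (2 * \<epsilon> * d i))
          \<le> 2 * \<epsilon> * (d 1 / (1 - \<rho> powr dmin) + dmax * \<rho> powr dmin / (1 - \<rho> powr dmin)\<^sup>2)"
    using gaps[of 1] n2 dmin_pos eps by (intro sum_normalized_powr_mult_le rho gaps) (auto simp: d_def)
  then show ?thesis
    using rho by (intro conjI[OF sum_mono] mult_left_mono tv_swap) (auto simp: sum_nonneg)
qed

end
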